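(* Let $0\le \ell<k$ be integers and $\gamma\ge 0$ a real number. If a $k$-graph $G$ with $m$ vertices and $e>0$ edges satisfies $\delta^+_\ell(G)\ge \gamma m^{k-\ell}/(k-\ell)!$, then $e\ge \gamma^{k/(k-\ell)} m^k/k!$.
   Context: A $k$-graph $G$ is a pair $(V(G),E(G))$ with $E(G)$ a collection of $k$-subsets of the finite set $V(G)$. The minimum positive $\ell$-degree $\delta^+_\ell(G)$ of a $k$-graph $G$ with at least one edge is the maximum $m$ such that every $\ell$-subset of $V(G)$ is contained in either no edges or at least $m$ edges of $G$. *)

theory Defs
  imports Complex_Main
begin

definition kgraph :: "nat \<Rightarrow> 'a set \<Rightarrow> 'a set set \<Rightarrow> bool" where
  "kgraph k V E \<longleftrightarrow> finite V \<and> (\<forall>e\<in>E. e \<subseteq> V \<and> card e = k)"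

definition hdeg :: "'a set set \<Rightarrow> 'a set \<Rightarrow> nat" where
  "hdeg E S = card {e \<in> E. S \<subseteq> e}"

definition min_pos_deg :: "'a set \<Rightarrow> 'a set set \<Rightarrow> nat \<Rightarrow> nat" where
  "min_pos_deg V E l = (GREATEST m. \<forall>S. S \<subseteq> V \<and> card S = l \<longrightarrow>
       hdeg E S = 0 \<or> m \<le> hdeg E S)"

end

theory Submission
  imports Defs
begin

text \<open>Put \<open>x = \<gamma> powr (1 / (k - l)) * m\<close>. By downward induction on \<open>j = l, \<dots>, 0\<close>,
  every \<open>j\<close>-set \<open>S\<close> of positive degree lies in at least \<open>x ^ (k - j) / (k - j)!\<close> edges.
  For the step let \<open>r = k - j - 1 \<ge> 1\<close> and let \<open>N\<close> be the set of vertices \<open>v \<notin> S\<close> for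
  which \<open>S \<union> {v}\<close> has positive degree. The degree of each such \<open>S \<union> {v}\<close> is at least
  \<open>x ^ r / r!\<close> and at most \<open>(|N| choose r) \<le> |N| ^ r / r!\<close>, so \<open>|N| \<ge> x\<close>. Double
  counting the pairs \<open>(v, e)\<close> with \<open>S \<union> {v} \<subseteq> e\<close> then gives
  \<open>(k - j) deg S = (\<Sum>v\<in>N. deg (S \<union> {v})) \<ge> |N| x ^ r / r! \<ge> x ^ (r + 1) / r!\<close>.
  At \<open>j = 0\<close> the degree of the empty set is the number of edges.\<close>

lemma of_nat_choose_le_power_div_fact: "real (n choose r) \<le> real n ^ r / fact r"
proof -
  have "real (n choose r) * fact r \<le> real n ^ r"
    using binomial_fact_pow[of n r] by (metis of_nat_fact of_nat_le_iff of_nat_mult of_nat_power)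
  then show ?thesis by (simp add: pos_le_divide_eq)
qed

lemma kgraph_finite_edges: "kgraph k V E \<Longrightarrow> finite E"
  unfolding kgraph_def by (meson Pow_iff finite_Pow_iff finite_subset subsetI)

lemma hdeg_pos_iff: "finite E \<Longrightarrow> 0 < hdeg E S \<longleftrightarrow> (\<exists>e\<in>E. S \<subseteq> e)"
  by (auto simp: hdeg_def card_gt_0_iff)

lemma hdeg_empty: "hdeg E {} = card E"
  by (simp add: hdeg_def)

lemma kgraph_hdeg_pos_subset:
  assumes "kgraph k V E" and "0 < hdeg E S"
  shows "S \<subseteq> V" and "finite S"
proof -
  obtain e where "e \<in> E" "S \<subseteq> e"
    using assms kgraph_finite_edges hdeg_pos_iff by blast
  with assms(1) show "S \<subseteq> V" and "finite S"
    unfolding kgraph_def by (auto intro: finite_subset)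
qed

lemma min_pos_deg_le_hdeg:
  assumes "S \<subseteq> V" and "card S = l" and "0 < hdeg E S"
  shows "min_pos_deg V E l \<le> hdeg E S"
proof -
  let ?P = "\<lambda>m. \<forall>S. S \<subseteq> V \<and> card S = l \<longrightarrow> hdeg E S = 0 \<or> m \<le> hdeg E S"
  have bounded: "m \<le> hdeg E S" if "?P m" for m
    using that assms by auto
  have "?P (min_pos_deg V E l)"
    unfolding min_pos_deg_def by (rule GreatestI_nat[of ?P 0]) (use bounded in auto)
  then show ?thesis
    using assms by auto
qed

lemma hdeg_le_choose:
  assumes "kgraph k V E" and "finite W" and "\<And>e. e \<in> E \<Longrightarrow> T \<subseteq> e \<Longrightarrow> e - T \<subseteq> W"
  shows "hdeg E T \<le> card W choose (k - card T)"
proof -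
  let ?B = "{e \<in> E. T \<subseteq> e}"
  have "(\<lambda>e. e - T) ` ?B \<subseteq> {U. U \<subseteq> W \<and> card U = k - card T}"
  proof (intro subsetI, elim imageE)
    fix U e assume "U = e - T" and e: "e \<in> ?B"
    then have "finite T"
      using assms(1) unfolding kgraph_def by (auto intro: finite_subset)
    with e \<open>U = e - T\<close> assms show "U \<in> {U. U \<subseteq> W \<and> card U = k - card T}"
      unfolding kgraph_def by (simp add: card_Diff_subset)
  qed
  moreover have "inj_on (\<lambda>e. e - T) ?B"
    by (rule inj_onI) auto
  ultimately have "card ?B \<le> card {U. U \<subseteq> W \<and> card U = k - card T}"
    using assms(2) by (intro card_inj_on_le) auto
  then show ?thesis
    using assms(2) by (simp add: hdeg_def n_subsets)
qed

lemma sum_hdeg_insert: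
  assumes "kgraph k V E" and "finite S"
  shows "(\<Sum>v\<in>V - S. hdeg E (insert v S)) = (k - card S) * hdeg E S"
proof -
  let ?A = "{e \<in> E. S \<subseteq> e}"
  have V: "finite V" and edge: "\<And>e. e \<in> E \<Longrightarrow> e \<subseteq> V \<and> card e = k"
    using assms(1) by (auto simp: kgraph_def)
  have "hdeg E (insert v S) = card {e \<in> ?A. v \<in> e}" for v
    unfolding hdeg_def by (rule arg_cong[where f = card]) auto
  then have "(\<Sum>v\<in>V - S. hdeg E (insert v S)) = (\<Sum>v\<in>V - S. card {e \<in> ?A. v \<in> e})"
    by simp
  also have "\<dots> = (k - card S) * card ?A"
  proof (rule sum_multicount)
    show "finite ?A"
      using kgraph_finite_edges[OF assms(1)] by simp
    show "\<forall>e\<in>?A. card {v \<in> V - S. v \<in> e} = k - card S"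
    proof
      fix e assume e: "e \<in> ?A"
      then have "{v \<in> V - S. v \<in> e} = e - S"
        using edge by blast
      with e edge assms(2) show "card {v \<in> V - S. v \<in> e} = k - card S"
        by (simp add: card_Diff_subset)
    qed
  qed (use V in simp)
  finally show ?thesis
    by (simp add: hdeg_def)
qed

definition link_vertices :: "'a set \<Rightarrow> 'a set set \<Rightarrow> 'a set \<Rightarrow> 'a set" where
  "link_vertices V E S = {v \<in> V - S. 0 < hdeg E (insert v S)}"

lemma finite_link_vertices: "kgraph k V E \<Longrightarrow> finite (link_vertices V E S)"
  by (simp add: link_vertices_def kgraph_def)

lemma edge_minus_subset_link_vertices:
  assumes "kgraph k V E" and "e \<in> E" and "S \<subseteq> e"
  shows "e - S \<subseteq> link_vertices V E S"
  using assms kgraph_finite_edges[OF assms(1)]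
  unfolding link_vertices_def kgraph_def by (auto simp: hdeg_pos_iff)

lemma link_vertices_nonempty:
  assumes kg: "kgraph k V E" and "card S < k" and "0 < hdeg E S"
  shows "link_vertices V E S \<noteq> {}"
proof -
  obtain e where e: "e \<in> E" "S \<subseteq> e"
    using assms kgraph_finite_edges hdeg_pos_iff by blast
  have "e - S \<noteq> {}"
  proof
    assume "e - S = {}"
    with e(2) have "e = S"
      by blast
    with kg e(1) \<open>card S < k\<close> show False
      by (simp add: kgraph_def)
  qed
  with edge_minus_subset_link_vertices[OF kg e] show ?thesis
    by blast
qed

lemma hdeg_insert_le_choose_link:
  assumes kg: "kgraph k V E" and "finite S" and "v \<notin> S"
  shows "hdeg E (insert v S) \<le> card (link_vertices V E S) choose (k - Suc (card S))"
proof -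
  have "e - insert v S \<subseteq> link_vertices V E S" if "e \<in> E" "insert v S \<subseteq> e" for e
    using edge_minus_subset_link_vertices[OF kg that(1)] that(2) by blast
  then have "hdeg E (insert v S) \<le> card (link_vertices V E S) choose (k - card (insert v S))"
    by (intro hdeg_le_choose[OF kg finite_link_vertices[OF kg]])
  with assms(2,3) show ?thesis
    by simp
qed

lemma sum_hdeg_insert_link_vertices:
  assumes kg: "kgraph k V E" and "finite S"
  shows "(\<Sum>v\<in>link_vertices V E S. hdeg E (insert v S)) = (k - card S) * hdeg E S"
proof -
  have "(\<Sum>v\<in>link_vertices V E S. hdeg E (insert v S)) = (\<Sum>v\<in>V - S. hdeg E (insert v S))"
    using kg by (intro sum.mono_neutral_left) (auto simp: link_vertices_def kgraph_def)
  with sum_hdeg_insert[OF assms] show ?thesis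
    by simp
qed

definition pos_hdeg_bound :: "nat \<Rightarrow> 'a set set \<Rightarrow> real \<Rightarrow> nat \<Rightarrow> bool" where
  "pos_hdeg_bound k E x j \<longleftrightarrow>
     (\<forall>S. card S = j \<longrightarrow> 0 < hdeg E S \<longrightarrow> x ^ (k - j) / fact (k - j) \<le> real (hdeg E S))"

lemma pos_hdeg_bound_min_pos_deg:
  assumes "kgraph k V E" and "x ^ (k - l) / fact (k - l) \<le> real (min_pos_deg V E l)"
  shows "pos_hdeg_bound k E x l"
  unfolding pos_hdeg_bound_def
proof (intro allI impI)
  fix S assume "card S = l" and "0 < hdeg E S"
  then have "min_pos_deg V E l \<le> hdeg E S"
    using min_pos_deg_le_hdeg kgraph_hdeg_pos_subset(1)[OF assms(1)] by blast
  with assms(2) show "x ^ (k - l) / fact (k - l) \<le> real (hdeg E S)"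
    by linarith
qed

lemma pos_hdeg_bound_step:
  assumes kg: "kgraph k V E" and "0 \<le> x" and "Suc j < k"
    and bound: "pos_hdeg_bound k E x (Suc j)"
  shows "pos_hdeg_bound k E x j"
  unfolding pos_hdeg_bound_def
proof (intro allI impI)
  fix S assume S: "card S = j" and pos: "0 < hdeg E S"
  define r where "r = k - Suc j"
  define N where "N = link_vertices V E S"
  have "k - j = Suc r"
    using \<open>Suc j < k\<close> by (simp add: r_def)
  have "finite S"
    using kgraph_hdeg_pos_subset(2)[OF kg pos] .
  have link_lower: "x ^ r / fact r \<le> real (hdeg E (insert v S))" if "v \<in> N" for v
    using bound that S \<open>finite S\<close> by (simp add: pos_hdeg_bound_def N_def link_vertices_def r_def)
  obtain v where "v \<in> N"
    using link_vertices_nonempty[OF kg _ pos] S \<open>Suc j < k\<close> by (auto simp: N_def)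
  have "real (hdeg E (insert v S)) \<le> real (card N) ^ r / fact r"
    using hdeg_insert_le_choose_link[OF kg \<open>finite S\<close>, of v] \<open>v \<in> N\<close> S
      of_nat_choose_le_power_div_fact[of "card N" r]
    by (simp add: N_def link_vertices_def r_def)
  with link_lower[OF \<open>v \<in> N\<close>] have "x ^ r / fact r \<le> real (card N) ^ r / fact r"
    by linarith
  then have "x \<le> real (card N)"
    using \<open>0 \<le> x\<close> \<open>Suc j < k\<close> by (simp add: divide_le_cancel r_def)
  then have "x ^ Suc r / fact r \<le> real (card N) * (x ^ r / fact r)"
    using \<open>0 \<le> x\<close> by (simp add: mult_right_mono divide_right_mono)
  also have "\<dots> \<le> (\<Sum>v\<in>N. real (hdeg E (insert v S)))"
    using sum_mono[of N "\<lambda>_. x ^ r / fact r", OF link_lower] by simp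
  also have "\<dots> = real (Suc r) * real (hdeg E S)"
    using sum_hdeg_insert_link_vertices[OF kg \<open>finite S\<close>] S \<open>k - j = Suc r\<close>
    by (simp add: N_def algebra_simps flip: of_nat_sum)
  finally have "x ^ Suc r / fact (Suc r) \<le> real (hdeg E S)"
    by (simp add: divide_simps mult_ac)
  with \<open>k - j = Suc r\<close> show "x ^ (k - j) / fact (k - j) \<le> real (hdeg E S)"
    by simp
qed

lemma pos_hdeg_bound_downward:
  assumes "kgraph k V E" and "0 \<le> x" and "l < k" and "pos_hdeg_bound k E x l" and "j \<le> l"
  shows "pos_hdeg_bound k E x j"
  using assms(5)
proof (induction j rule: inc_induct)
  case base
  show ?case by (rule assms(4))
next
  case (step n)
  show ?case
    by (rule pos_hdeg_bound_step[OF assms(1,2)]) (use step assms(3) in simp_all)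
qed

theorem lemma2p1:
  fixes V :: "'a set" and E :: "'a set set" and k l :: nat and \<gamma> :: real
  assumes "kgraph k V E"
    and "l < k"
    and "\<gamma> \<ge> 0"
    and "card E > 0"
    and "real (min_pos_deg V E l) \<ge> \<gamma> * real (card V) ^ (k - l) / fact (k - l)"
  shows "real (card E) \<ge> \<gamma> powr (real k / real (k - l)) * real (card V) ^ k / fact k"
proof (cases "\<gamma> = 0")
  case True
  then show ?thesis by simp
next
  case False
  with assms(3) have "0 < \<gamma>" by simp
  define x where "x = \<gamma> powr (1 / real (k - l)) * real (card V)"
  have x_pow: "x ^ n = \<gamma> powr (real n / real (k - l)) * real (card V) ^ n" for n
    using \<open>0 < \<gamma>\<close> by (simp add: x_def power_mult_distrib powr_power)
  have "0 \<le> x"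
    by (simp add: x_def)
  have "x ^ (k - l) = \<gamma> * real (card V) ^ (k - l)"
    using x_pow[of "k - l"] \<open>0 < \<gamma>\<close> assms(2) by simp
  with assms(5) have "pos_hdeg_bound k E x l"
    by (intro pos_hdeg_bound_min_pos_deg[OF assms(1)]) simp
  then have "pos_hdeg_bound k E x 0"
    using pos_hdeg_bound_downward assms(1,2) \<open>0 \<le> x\<close> by blast
  then have "x ^ k / fact k \<le> real (card E)"
    using assms(4) by (simp add: pos_hdeg_bound_def flip: hdeg_empty)
  then show ?thesis
    by (simp add: x_pow)
qed

end
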